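(* Let $\mathbf{w}_1,\dots,\mathbf{w}_6:\mathbb{R}\to\mathbb{R}^7$ be differentiable functions satisfying $\frac{d\mathbf{w}_1}{dt}=2\mathbf{w}_2\times\mathbf{w}_3$, $\frac{d\mathbf{w}_2}{dt}=2\mathbf{w}_1\times\mathbf{w}_3$, $\frac{d\mathbf{w}_3}{dt}=-2\mathbf{w}_1\times\mathbf{w}_2$, $\frac{d\mathbf{w}_4}{dt}=\mathbf{w}_1\times\mathbf{w}_5+\mathbf{w}_2\times\mathbf{w}_5-\mathbf{w}_3\times\mathbf{w}_4$, $\frac{d\mathbf{w}_5}{dt}=-\mathbf{w}_1\times\mathbf{w}_4+\mathbf{w}_2\times\mathbf{w}_4+\mathbf{w}_3\times\mathbf{w}_5$, $\frac{d\mathbf{w}_6}{dt}=\mathbf{w}_4\times\mathbf{w}_5$, and define $F:\mathbb{R}^3\to\mathbb{R}^7$ by $F(y_1,y_2,t)=\tfrac12(y_1^2+y_2^2)\mathbf{w}_1(t)+\tfrac12(y_1^2-y_2^2)\mathbf{w}_2(t)+y_1y_2\mathbf{w}_3(t)+y_1\mathbf{w}_4(t)+y_2\mathbf{w}_5(t)+\mathbf{w}_6(t)$. Then $\frac{\partial F}{\partial y_1}\times\frac{\partial F}{\partial y_2}=\frac{\partial F}{\partial t}$ everywhere, and $dF$ is injective at a point $(y_1,y_2,t)$ if and only if $\frac{\partial F}{\partial y_1}$ and $\frac{\partial F}{\partial y_2}$ are linearly independent there. In particular $F$ is an immersion at $(0,0,0)$ if and only if $\mathbf{w}_4(0)$ and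 $\mathbf{w}_5(0)$ are linearly independent.
   Context: Let $(x_1,\dots,x_7)$ be coordinates on $\mathbb{R}^7$ with Euclidean metric $g$, and write $dx_{ijk}=dx_i\wedge dx_j\wedge dx_k$. Define $\varphi=dx_{123}+dx_{145}+dx_{167}+dx_{246}-dx_{257}-dx_{347}-dx_{356}$. The cross product $\times$ on $\mathbb{R}^7$ is defined by $g(u\times v,w)=\varphi(u,v,w)$ for all $u,v,w\in\mathbb{R}^7$. *)

theory Defs
  imports "HOL-Analysis.Analysis"
begin

text \<open>Vectors of R^7 are real^7; coordinates x_1,...,x_7 are x$1,...,x$7
  (in the numeral type 7, the literal 7 denotes the remaining seventh index).\<close>

definition dx3 :: "7 \<Rightarrow> 7 \<Rightarrow> 7 \<Rightarrow> real^7 \<Rightarrow> real^7 \<Rightarrow> real^7 \<Rightarrow> real" where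
  "dx3 i j k u v w =
     u$i * (v$j * w$k - v$k * w$j) - u$j * (v$i * w$k - v$k * w$i)
     + u$k * (v$i * w$j - v$j * w$i)"

definition phi7 :: "real^7 \<Rightarrow> real^7 \<Rightarrow> real^7 \<Rightarrow> real" where
  "phi7 u v w = dx3 1 2 3 u v w + dx3 1 4 5 u v w + dx3 1 6 7 u v w + dx3 2 4 6 u v w
      - dx3 2 5 7 u v w - dx3 3 4 7 u v w - dx3 3 5 6 u v w"

definition cross7 :: "real^7 \<Rightarrow> real^7 \<Rightarrow> real^7" where
  "cross7 u v = (THE z. \<forall>w. z \<bullet> w = phi7 u v w)"

definition Fmap :: "(real \<Rightarrow> real^7) \<Rightarrow> (real \<Rightarrow> real^7) \<Rightarrow> (real \<Rightarrow> real^7) \<Rightarrow>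
    (real \<Rightarrow> real^7) \<Rightarrow> (real \<Rightarrow> real^7) \<Rightarrow> (real \<Rightarrow> real^7) \<Rightarrow> real \<times> real \<times> real \<Rightarrow> real^7" where
  "Fmap w1 w2 w3 w4 w5 w6 = (\<lambda>(y1, y2, t).
      (1/2 * (y1^2 + y2^2)) *\<^sub>R w1 t + (1/2 * (y1^2 - y2^2)) *\<^sub>R w2 t + (y1 * y2) *\<^sub>R w3 t
      + y1 *\<^sub>R w4 t + y2 *\<^sub>R w5 t + w6 t)"

definition lin_indep2 :: "real^7 \<Rightarrow> real^7 \<Rightarrow> bool" where
  "lin_indep2 a b \<longleftrightarrow> (\<forall>c d::real. c *\<^sub>R a + d *\<^sub>R b = 0 \<longrightarrow> c = 0 \<and> d = 0)"

end

theory Submission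
  imports Defs
begin

text \<open>The partial derivatives of \<open>F\<close> are \<open>F\<^sub>1 = y\<^sub>1(w\<^sub>1 + w\<^sub>2) + y\<^sub>2 w\<^sub>3 + w\<^sub>4\<close> and
  \<open>F\<^sub>2 = y\<^sub>2(w\<^sub>1 - w\<^sub>2) + y\<^sub>1 w\<^sub>3 + w\<^sub>5\<close>. Expanding \<open>F\<^sub>1 \<times> F\<^sub>2\<close> bilinearly, the coefficient of
  each monomial in \<open>y\<^sub>1, y\<^sub>2\<close> is exactly the right-hand side of the ODE for the \<open>w\<^sub>i\<close>
  carrying that monomial in \<open>F\<close>, so \<open>F\<^sub>1 \<times> F\<^sub>2 = F\<^sub>t\<close>. Hence \<open>dF\<close> maps the coordinate
  vectors to \<open>F\<^sub>1, F\<^sub>2, F\<^sub>1 \<times> F\<^sub>2\<close>. The cross product is orthogonal to both factors and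
  satisfies Lagrange's identity \<open>|a \<times> b|\<^sup>2 = |a|\<^sup>2|b|\<^sup>2 - (a\<cdot>b)\<^sup>2\<close>, so it is nonzero exactly
  when \<open>a, b\<close> are independent; thus \<open>dF\<close> is injective iff \<open>F\<^sub>1, F\<^sub>2\<close> are independent.\<close>

lemma exhaust_7:
  fixes x :: 7
  shows "x = 1 \<or> x = 2 \<or> x = 3 \<or> x = 4 \<or> x = 5 \<or> x = 6 \<or> x = 7"
proof (induct x)
  case (of_int z)
  then have "z = 0 \<or> z = 1 \<or> z = 2 \<or> z = 3 \<or> z = 4 \<or> z = 5 \<or> z = 6" by fastforce
  then show ?case by auto
qed

lemma forall_7: "(\<forall>i::7. P i) \<longleftrightarrow> P 1 \<and> P 2 \<and> P 3 \<and> P 4 \<and> P 5 \<and> P 6 \<and> P 7"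
  by (metis exhaust_7)

lemma UNIV_7: "UNIV = {1, 2, 3, 4, 5, 6, 7::7}"
  using exhaust_7 by auto

lemma sum_7: "sum f (UNIV::7 set) = f 1 + f 2 + f 3 + f 4 + f 5 + f 6 + f 7"
  unfolding UNIV_7 by (simp add: ac_simps)

lemma cross7_eq:
  "cross7 u v = (\<chi> i.
     if i = 1 then (u$2 * v$3 - u$3 * v$2) + (u$4 * v$5 - u$5 * v$4) + (u$6 * v$7 - u$7 * v$6)
     else if i = 2 then (u$3 * v$1 - u$1 * v$3) + (u$4 * v$6 - u$6 * v$4) - (u$5 * v$7 - u$7 * v$5)
     else if i = 3 then (u$1 * v$2 - u$2 * v$1) - (u$4 * v$7 - u$7 * v$4) - (u$5 * v$6 - u$6 * v$5)
     else if i = 4 then (u$5 * v$1 - u$1 * v$5) + (u$6 * v$2 - u$2 * v$6) - (u$7 * v$3 - u$3 * v$7)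
     else if i = 5 then (u$1 * v$4 - u$4 * v$1) - (u$7 * v$2 - u$2 * v$7) - (u$6 * v$3 - u$3 * v$6)
     else if i = 6 then (u$7 * v$1 - u$1 * v$7) + (u$2 * v$4 - u$4 * v$2) - (u$3 * v$5 - u$5 * v$3)
     else (u$1 * v$6 - u$6 * v$1) - (u$2 * v$5 - u$5 * v$2) - (u$3 * v$4 - u$4 * v$3))"
  (is "_ = ?c")
  unfolding cross7_def
proof (rule the_equality)
  show c_inner: "\<forall>w. ?c \<bullet> w = phi7 u v w"
    by (simp add: inner_vec_def sum_7 phi7_def dx3_def algebra_simps)
  fix z assume "\<forall>w. z \<bullet> w = phi7 u v w"
  then have "(z - ?c) \<bullet> (z - ?c) = 0"
    by (simp add: inner_diff_left c_inner)
  then show "z = ?c" by simp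
qed

lemma cross7_components:
  "cross7 u v $ 1 = (u$2 * v$3 - u$3 * v$2) + (u$4 * v$5 - u$5 * v$4) + (u$6 * v$7 - u$7 * v$6)"
  "cross7 u v $ 2 = (u$3 * v$1 - u$1 * v$3) + (u$4 * v$6 - u$6 * v$4) - (u$5 * v$7 - u$7 * v$5)"
  "cross7 u v $ 3 = (u$1 * v$2 - u$2 * v$1) - (u$4 * v$7 - u$7 * v$4) - (u$5 * v$6 - u$6 * v$5)"
  "cross7 u v $ 4 = (u$5 * v$1 - u$1 * v$5) + (u$6 * v$2 - u$2 * v$6) - (u$7 * v$3 - u$3 * v$7)"
  "cross7 u v $ 5 = (u$1 * v$4 - u$4 * v$1) - (u$7 * v$2 - u$2 * v$7) - (u$6 * v$3 - u$3 * v$6)"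
  "cross7 u v $ 6 = (u$7 * v$1 - u$1 * v$7) + (u$2 * v$4 - u$4 * v$2) - (u$3 * v$5 - u$5 * v$3)"
  "cross7 u v $ 7 = (u$1 * v$6 - u$6 * v$1) - (u$2 * v$5 - u$5 * v$2) - (u$3 * v$4 - u$4 * v$3)"
  by (simp_all add: cross7_eq)

lemma inner_cross7_left: "a \<bullet> cross7 a b = 0"
  by (simp add: inner_vec_def sum_7 cross7_components algebra_simps)

lemma inner_cross7_right: "b \<bullet> cross7 a b = 0"
  by (simp add: inner_vec_def sum_7 cross7_components algebra_simps)

lemma cross7_inner_self: "cross7 a b \<bullet> cross7 a b = (a \<bullet> a) * (b \<bullet> b) - (a \<bullet> b)\<^sup>2"
  by (simp add: inner_vec_def sum_7 cross7_components algebra_simps power2_eq_square)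

lemma lagrange_equality_imp_dependent:
  fixes a b :: "'a::real_inner"
  assumes "(a \<bullet> b)\<^sup>2 = (a \<bullet> a) * (b \<bullet> b)"
  shows "(- (a \<bullet> b)) *\<^sub>R a + (a \<bullet> a) *\<^sub>R b = 0"
proof -
  let ?x = "(- (a \<bullet> b)) *\<^sub>R a + (a \<bullet> a) *\<^sub>R b"
  have "?x \<bullet> ?x = (a \<bullet> a) * ((a \<bullet> a) * (b \<bullet> b) - (a \<bullet> b)\<^sup>2)"
    by (simp add: algebra_simps inner_commute power2_eq_square)
  then show ?thesis
    using assms by simp
qed

lemma cross7_nonzero:
  assumes "lin_indep2 a b"
  shows "cross7 a b \<noteq> 0"
proof
  assume "cross7 a b = 0"
  then have "(a \<bullet> b)\<^sup>2 = (a \<bullet> a) * (b \<bullet> b)"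
    using cross7_inner_self[of a b] by simp
  then have "a \<bullet> a = 0"
    using lagrange_equality_imp_dependent assms unfolding lin_indep2_def by blast
  then have "1 *\<^sub>R a + 0 *\<^sub>R b = 0"
    by simp
  then show False
    using assms unfolding lin_indep2_def by (metis one_neq_zero)
qed

lemma inj_orthogonal_frame_iff:
  fixes a b c :: "real^7"
  assumes "a \<bullet> c = 0" "b \<bullet> c = 0"
  shows "inj (\<lambda>(h1, h2, h3::real). h1 *\<^sub>R a + h2 *\<^sub>R b + h3 *\<^sub>R c) \<longleftrightarrow> lin_indep2 a b \<and> c \<noteq> 0"
    (is "inj ?f \<longleftrightarrow> _")
proof
  assume inj: "inj ?f"
  have "lin_indep2 a b"
    unfolding lin_indep2_def
  proof (intro allI impI)
    fix x y :: real
    assume "x *\<^sub>R a + y *\<^sub>R b = 0"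
    then have "?f (x, y, 0) = ?f (0, 0, 0)" by simp
    then show "x = 0 \<and> y = 0" using injD[OF inj] by blast
  qed
  moreover have "c \<noteq> 0"
    using injD[OF inj, of "(0, 0, 1)" "(0, 0, 0)"] by auto
  ultimately show "lin_indep2 a b \<and> c \<noteq> 0" ..
next
  assume indep: "lin_indep2 a b \<and> c \<noteq> 0"
  show "inj ?f"
  proof (rule injI, clarsimp)
    fix x1 x2 x3 y1 y2 y3 :: real
    assume "x1 *\<^sub>R a + x2 *\<^sub>R b + x3 *\<^sub>R c = y1 *\<^sub>R a + y2 *\<^sub>R b + y3 *\<^sub>R c"
    then have diff: "(x1 - y1) *\<^sub>R a + (x2 - y2) *\<^sub>R b + (x3 - y3) *\<^sub>R c = 0"
      by (simp add: algebra_simps)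
    then have "((x1 - y1) *\<^sub>R a + (x2 - y2) *\<^sub>R b + (x3 - y3) *\<^sub>R c) \<bullet> c = 0"
      by simp
    then have "(x3 - y3) * (c \<bullet> c) = 0"
      using assms by (simp only: inner_add_left inner_scaleR_left mult_zero_right add_0_left)
    then have "x3 = y3"
      using indep by simp
    then have "(x1 - y1) *\<^sub>R a + (x2 - y2) *\<^sub>R b = 0"
      using diff by simp
    then have "x1 - y1 = 0 \<and> x2 - y2 = 0"
      using indep unfolding lin_indep2_def by blast
    then show "x1 = y1 \<and> x2 = y2 \<and> x3 = y3"
      using \<open>x3 = y3\<close> by simp
  qed
qed

lemma has_derivative_partials_3:
  assumes "(f has_derivative (\<lambda>(h1, h2, h3). h1 *\<^sub>R a + h2 *\<^sub>R b + h3 *\<^sub>R c)) (at (x, y, z))"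
  shows "((\<lambda>s. f (s, y, z)) has_vector_derivative a) (at x)"
    and "((\<lambda>s. f (x, s, z)) has_vector_derivative b) (at y)"
    and "((\<lambda>s. f (x, y, s)) has_vector_derivative c) (at z)"
proof -
  have chain: "((\<lambda>s. f (g s)) has_vector_derivative
      (case v of (h1, h2, h3) \<Rightarrow> h1 *\<^sub>R a + h2 *\<^sub>R b + h3 *\<^sub>R c)) (at s0)"
    if "(g has_vector_derivative v) (at s0)" "g s0 = (x, y, z)"
    for g :: "real \<Rightarrow> real \<times> real \<times> real" and v s0
    using vector_derivative_diff_chain_within[OF that(1), of f] assms that(2)
    by (simp add: o_def has_derivative_at_withinI)
  show "((\<lambda>s. f (s, y, z)) has_vector_derivative a) (at x)"
    using chain[of "\<lambda>s. (s, y, z)" "(1, 0, 0)" x] by (simp add: derivative_intros)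
  show "((\<lambda>s. f (x, s, z)) has_vector_derivative b) (at y)"
    using chain[of "\<lambda>s. (x, s, z)" "(0, 1, 0)" y] by (simp add: derivative_intros)
  show "((\<lambda>s. f (x, y, s)) has_vector_derivative c) (at z)"
    using chain[of "\<lambda>s. (x, y, s)" "(0, 0, 1)" z] by (simp add: derivative_intros)
qed

lemma Fmap_has_derivative:
  assumes "(w1 has_vector_derivative a1) (at t)" "(w2 has_vector_derivative a2) (at t)"
      and "(w3 has_vector_derivative a3) (at t)" "(w4 has_vector_derivative a4) (at t)"
      and "(w5 has_vector_derivative a5) (at t)" "(w6 has_vector_derivative a6) (at t)"
  shows "(Fmap w1 w2 w3 w4 w5 w6 has_derivative (\<lambda>(h1, h2, h3).
            h1 *\<^sub>R (y1 *\<^sub>R w1 t + y1 *\<^sub>R w2 t + y2 *\<^sub>R w3 t + w4 t)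
          + h2 *\<^sub>R (y2 *\<^sub>R w1 t - y2 *\<^sub>R w2 t + y1 *\<^sub>R w3 t + w5 t)
          + h3 *\<^sub>R ((1/2 * (y1\<^sup>2 + y2\<^sup>2)) *\<^sub>R a1 + (1/2 * (y1\<^sup>2 - y2\<^sup>2)) *\<^sub>R a2
                    + (y1 * y2) *\<^sub>R a3 + y1 *\<^sub>R a4 + y2 *\<^sub>R a5 + a6))) (at (y1, y2, t))"
proof -
  have time: "((\<lambda>p::real \<times> real \<times> real. w (snd (snd p))) has_derivative (\<lambda>h. snd (snd h) *\<^sub>R a))
      (at (y1, y2, t))" if "(w has_vector_derivative a) (at t)" for w :: "real \<Rightarrow> real^7" and a
  proof -
    have "((w \<circ> (\<lambda>p::real \<times> real \<times> real. snd (snd p))) has_derivative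
        ((\<lambda>x. x *\<^sub>R a) \<circ> (\<lambda>h. snd (snd h)))) (at (y1, y2, t))"
      using that unfolding has_vector_derivative_def
      by (intro diff_chain_at) (auto intro!: derivative_eq_intros)
    then show ?thesis by (simp add: o_def)
  qed
  have Fmap_eq: "Fmap w1 w2 w3 w4 w5 w6 = (\<lambda>p.
        (1/2 * ((fst p)\<^sup>2 + (fst (snd p))\<^sup>2)) *\<^sub>R w1 (snd (snd p))
      + (1/2 * ((fst p)\<^sup>2 - (fst (snd p))\<^sup>2)) *\<^sub>R w2 (snd (snd p))
      + (fst p * fst (snd p)) *\<^sub>R w3 (snd (snd p))
      + fst p *\<^sub>R w4 (snd (snd p)) + fst (snd p) *\<^sub>R w5 (snd (snd p)) + w6 (snd (snd p)))"
    by (auto simp: Fmap_def)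
  show ?thesis
    unfolding Fmap_eq
    by (rule has_derivative_eq_rhs, (rule derivative_eq_intros time assms | simp)+)
      (auto simp: algebra_simps power2_eq_square add_divide_distrib diff_divide_distrib)
qed

lemma cross7_Fmap_partials:
  "cross7 (y1 *\<^sub>R w1 + y1 *\<^sub>R w2 + y2 *\<^sub>R w3 + w4) (y2 *\<^sub>R w1 - y2 *\<^sub>R w2 + y1 *\<^sub>R w3 + w5)
    = (1/2 * (y1\<^sup>2 + y2\<^sup>2)) *\<^sub>R (2 *\<^sub>R cross7 w2 w3) + (1/2 * (y1\<^sup>2 - y2\<^sup>2)) *\<^sub>R (2 *\<^sub>R cross7 w1 w3)
      + (y1 * y2) *\<^sub>R (- 2 *\<^sub>R cross7 w1 w2)
      + y1 *\<^sub>R (cross7 w1 w5 + cross7 w2 w5 - cross7 w3 w4)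
      + y2 *\<^sub>R (- cross7 w1 w4 + cross7 w2 w4 + cross7 w3 w5) + cross7 w4 w5"
  by (simp add: vec_eq_iff forall_7 cross7_components algebra_simps power2_eq_square)

theorem mainTheorem5:
  fixes w1 w2 w3 w4 w5 w6 :: "real \<Rightarrow> real^7"
  assumes d1: "\<And>t. (w1 has_vector_derivative 2 *\<^sub>R cross7 (w2 t) (w3 t)) (at t)"
      and d2: "\<And>t. (w2 has_vector_derivative 2 *\<^sub>R cross7 (w1 t) (w3 t)) (at t)"
      and d3: "\<And>t. (w3 has_vector_derivative - 2 *\<^sub>R cross7 (w1 t) (w2 t)) (at t)"
      and d4: "\<And>t. (w4 has_vector_derivative
                 cross7 (w1 t) (w5 t) + cross7 (w2 t) (w5 t) - cross7 (w3 t) (w4 t)) (at t)"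
      and d5: "\<And>t. (w5 has_vector_derivative
                 - cross7 (w1 t) (w4 t) + cross7 (w2 t) (w4 t) + cross7 (w3 t) (w5 t)) (at t)"
      and d6: "\<And>t. (w6 has_vector_derivative cross7 (w4 t) (w5 t)) (at t)"
  shows "(\<forall>y1 y2 t. \<exists>F' D1 D2 D3.
            (Fmap w1 w2 w3 w4 w5 w6 has_derivative F') (at (y1, y2, t))
          \<and> ((\<lambda>s. Fmap w1 w2 w3 w4 w5 w6 (s, y2, t)) has_vector_derivative D1) (at y1)
          \<and> ((\<lambda>s. Fmap w1 w2 w3 w4 w5 w6 (y1, s, t)) has_vector_derivative D2) (at y2)
          \<and> ((\<lambda>s. Fmap w1 w2 w3 w4 w5 w6 (y1, y2, s)) has_vector_derivative D3) (at t)
          \<and> cross7 D1 D2 = D3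
          \<and> (inj F' \<longleftrightarrow> lin_indep2 D1 D2))
       \<and> (\<forall>F'. (Fmap w1 w2 w3 w4 w5 w6 has_derivative F') (at (0, 0, 0))
            \<longrightarrow> (inj F' \<longleftrightarrow> lin_indep2 (w4 0) (w5 0)))"
proof -
  let ?F = "Fmap w1 w2 w3 w4 w5 w6"
  define F1 where "F1 y1 y2 t = y1 *\<^sub>R w1 t + y1 *\<^sub>R w2 t + y2 *\<^sub>R w3 t + w4 t" for y1 y2 t
  define F2 where "F2 y1 y2 t = y2 *\<^sub>R w1 t - y2 *\<^sub>R w2 t + y1 *\<^sub>R w3 t + w5 t" for y1 y2 t
  have dF: "(?F has_derivative (\<lambda>(h1, h2, h3).
      h1 *\<^sub>R F1 y1 y2 t + h2 *\<^sub>R F2 y1 y2 t + h3 *\<^sub>R cross7 (F1 y1 y2 t) (F2 y1 y2 t))) (at (y1, y2, t))"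
    for y1 y2 t
    using Fmap_has_derivative[OF d1 d2 d3 d4 d5 d6, where ?y1.0=y1 and ?y2.0=y2]
    unfolding F1_def F2_def cross7_Fmap_partials .
  have inj_iff: "inj (\<lambda>(h1, h2, h3::real). h1 *\<^sub>R a + h2 *\<^sub>R b + h3 *\<^sub>R cross7 a b) \<longleftrightarrow> lin_indep2 a b"
    for a b
    using inj_orthogonal_frame_iff[OF inner_cross7_left inner_cross7_right] cross7_nonzero by blast
  show ?thesis
  proof (intro conjI allI impI)
    fix y1 y2 t
    show "\<exists>F' D1 D2 D3. (?F has_derivative F') (at (y1, y2, t))
        \<and> ((\<lambda>s. ?F (s, y2, t)) has_vector_derivative D1) (at y1)
        \<and> ((\<lambda>s. ?F (y1, s, t)) has_vector_derivative D2) (at y2)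
        \<and> ((\<lambda>s. ?F (y1, y2, s)) has_vector_derivative D3) (at t)
        \<and> cross7 D1 D2 = D3 \<and> (inj F' \<longleftrightarrow> lin_indep2 D1 D2)"
      using dF has_derivative_partials_3[OF dF] inj_iff by blast
  next
    fix F'
    assume "(?F has_derivative F') (at (0, 0, 0))"
    with dF[of 0 0 0] have "F' = (\<lambda>(h1, h2, h3).
        h1 *\<^sub>R w4 0 + h2 *\<^sub>R w5 0 + h3 *\<^sub>R cross7 (w4 0) (w5 0))"
      by (simp add: F1_def F2_def has_derivative_unique)
    then show "inj F' \<longleftrightarrow> lin_indep2 (w4 0) (w5 0)"
      using inj_iff by simp
  qed
qed

end
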